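(* Let $U$ be a nonempty finite set, $R\subseteq U\times U$ serial and transitive, and $cl$ the closure operator of $M(Reg(U,R))$. Then $cl(X)=X$ for every $X\in Reg(U,R)$; i.e., every regular set is a closed set of $M(Reg(U,R))$.
   Context: $R_s(x)=\{y\in U\mid xRy\}$; $\underline{R}(X)=\{x\mid R_s(x)\subseteq X\}$, $\overline{R}(X)=\{x\mid R_s(x)\cap X\neq\emptyset\}$; $X$ is regular if $X=\underline{R}(\overline{R}(X))$, and $Reg(U,R)$ is the lattice of regular sets under inclusion, with least element $\emptyset$. $h(A)$ is the length of a maximal chain in $[\emptyset,A]$. $M(Reg(U,R))$ is the matroid on $U$ with independent sets $\{X\subseteq U\mid h(Y)\ge|X\cap Y|\ \forall Y\in Reg(U,R)\}$, rank function $r(X)=\max\{|I|\mid I\subseteq X \text{ independent}\}$, and closure operator $cl(X)=\{u\in U\mid r(X\cup\{u\})=r(X)\}$. *)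

theory Defs
  imports Main
begin

definition succ_set :: "('a \<times> 'a) set \<Rightarrow> 'a \<Rightarrow> 'a set" where
  "succ_set R x = {y. (x, y) \<in> R}"

definition lower_approx :: "'a set \<Rightarrow> ('a \<times> 'a) set \<Rightarrow> 'a set \<Rightarrow> 'a set" where
  "lower_approx U R X = {x \<in> U. succ_set R x \<subseteq> X}"

definition upper_approx :: "'a set \<Rightarrow> ('a \<times> 'a) set \<Rightarrow> 'a set \<Rightarrow> 'a set" where
  "upper_approx U R X = {x \<in> U. succ_set R x \<inter> X \<noteq> {}}"

definition regular :: "'a set \<Rightarrow> ('a \<times> 'a) set \<Rightarrow> 'a set \<Rightarrow> bool" where
  "regular U R X \<longleftrightarrow> X \<subseteq> U \<and> X = lower_approx U R (upper_approx U R X)"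

definition Reg :: "'a set \<Rightarrow> ('a \<times> 'a) set \<Rightarrow> 'a set set" where
  "Reg U R = {X. regular U R X}"

definition serial_on :: "'a set \<Rightarrow> ('a \<times> 'a) set \<Rightarrow> bool" where
  "serial_on U R \<longleftrightarrow> (\<forall>x\<in>U. \<exists>y\<in>U. (x, y) \<in> R)"

definition reg_chains :: "'a set \<Rightarrow> ('a \<times> 'a) set \<Rightarrow> 'a set \<Rightarrow> 'a set set set" where
  "reg_chains U R A = {C. C \<subseteq> {Y \<in> Reg U R. Y \<subseteq> A} \<and>
      (\<forall>Y\<in>C. \<forall>Z\<in>C. Y \<subseteq> Z \<or> Z \<subseteq> Y)}"

definition height :: "'a set \<Rightarrow> ('a \<times> 'a) set \<Rightarrow> 'a set \<Rightarrow> nat" where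
  "height U R A = Max ((\<lambda>C. card C - 1) ` reg_chains U R A)"

definition reg_indep :: "'a set \<Rightarrow> ('a \<times> 'a) set \<Rightarrow> 'a set \<Rightarrow> bool" where
  "reg_indep U R X \<longleftrightarrow> X \<subseteq> U \<and> (\<forall>Y\<in>Reg U R. card (X \<inter> Y) \<le> height U R Y)"

definition reg_rank :: "'a set \<Rightarrow> ('a \<times> 'a) set \<Rightarrow> 'a set \<Rightarrow> nat" where
  "reg_rank U R X = Max (card ` {I. I \<subseteq> X \<and> reg_indep U R I})"

definition reg_cl :: "'a set \<Rightarrow> ('a \<times> 'a) set \<Rightarrow> 'a set \<Rightarrow> 'a set" where
  "reg_cl U R X = {u \<in> U. reg_rank U R (X \<union> {u}) = reg_rank U R X}"

end

theory Submission
  imports Defs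
begin

(*
  Since X \<subseteq> cl(X) holds trivially, the content is: a point u \<in> U - X does not
  lie in cl(X).  Take a maximum independent I \<subseteq> X; we show that insert u I is
  still independent, so r(X \<union> {u}) > r(X).  For a regular Y with u \<notin> Y nothing
  changes; for a regular Y with u \<in> Y we use two facts:
    (1) Reg(U,R) is closed under intersection (this needs transitivity and
        finiteness: every point has a "final" successor w, one all of whose
        successors have the same successor set as w), so X \<inter> Y is regular;
    (2) the height is strictly monotone on regular sets, since a maximal chain
        below X \<inter> Y \<subset> Y extends by Y (and by the regular set {}, using seriality).
  Hence |I \<inter> Y| = |I \<inter> (X \<inter> Y)| \<le> h(X \<inter> Y) < h(Y), leaving room for u.
*)

lemma Reg_subset: "X \<in> Reg U R \<Longrightarrow> X \<subseteq> U"
  by (simp add: Reg_def regular_def)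

lemma Reg_fixpoint: "X \<in> Reg U R \<Longrightarrow> lower_approx U R (upper_approx U R X) = X"
  by (simp add: Reg_def regular_def)

lemma Reg_mem_iff:
  assumes "X \<in> Reg U R"
  shows "x \<in> X \<longleftrightarrow> x \<in> U \<and> (\<forall>y. (x, y) \<in> R \<longrightarrow> y \<in> U \<and> (\<exists>z\<in>X. (y, z) \<in> R))"
proof -
  have "X = lower_approx U R (upper_approx U R X)"
    using Reg_fixpoint[OF assms] by simp
  then show ?thesis
    unfolding lower_approx_def upper_approx_def succ_set_def by blast
qed

text \<open>Seriality makes the empty set regular: no point has all successors outside U.\<close>
lemma empty_in_Reg:
  assumes "serial_on U R"
  shows "{} \<in> Reg U R"
  using assms
  unfolding Reg_def regular_def lower_approx_def upper_approx_def succ_set_def serial_on_def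
  by auto

lemma lower_upper_mono:
  "X \<subseteq> Y \<Longrightarrow> lower_approx U R (upper_approx U R X) \<subseteq> lower_approx U R (upper_approx U R Y)"
  unfolding lower_approx_def upper_approx_def succ_set_def by blast

text \<open>Choose w with a successor set of least cardinality.\<close>
lemma final_successor_exists:
  assumes fin: "finite U" and RU: "R \<subseteq> U \<times> U" and tr: "trans R"
    and "(y, z) \<in> R"
  obtains w where "(y, w) \<in> R" and "\<And>v. (w, v) \<in> R \<Longrightarrow> succ_set R v = succ_set R w"
proof -
  obtain w where yw: "(y, w) \<in> R"
    and least: "\<forall>v. (y, v) \<in> R \<longrightarrow> card (succ_set R w) \<le> card (succ_set R v)"
    using ex_has_least_nat[where P = "\<lambda>v. (y, v) \<in> R" and m = "\<lambda>v. card (succ_set R v)", OF \<open>(y, z) \<in> R\<close>] by blast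
  have "succ_set R v = succ_set R w" if wv: "(w, v) \<in> R" for v
  proof -
    have sub: "succ_set R v \<subseteq> succ_set R w"
      using transD[OF tr wv] unfolding succ_set_def by blast
    have "succ_set R w \<subseteq> U" using RU unfolding succ_set_def by blast
    then have fw: "finite (succ_set R w)" using fin by (rule finite_subset)
    have "card (succ_set R w) \<le> card (succ_set R v)"
      using least transD[OF tr yw wv] by blast
    then have "card (succ_set R v) = card (succ_set R w)"
      using card_mono[OF fw sub] by linarith
    then show ?thesis using card_subset_eq[OF fw sub] by blast
  qed
  with yw show thesis by (rule that)
qed

text \<open>For x \<in> X \<inter> Y and a successor y,
  pass to a final successor w of y; a point z \<in> X seen from w also lies in Y,
  because every successor of z sees the same points as w, among them a point of Y.\<close>
lemma Reg_Int:
  assumes fin: "finite U" and RU: "R \<subseteq> U \<times> U" and tr: "trans R"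
    and X: "X \<in> Reg U R" and Y: "Y \<in> Reg U R"
  shows "X \<inter> Y \<in> Reg U R"
proof -
  have "x \<in> lower_approx U R (upper_approx U R (X \<inter> Y))" if xXY: "x \<in> X \<inter> Y" for x
  proof -
    have "y \<in> U \<and> (\<exists>z\<in>X \<inter> Y. (y, z) \<in> R)" if xy: "(x, y) \<in> R" for y
    proof -
      obtain z0 where "(y, z0) \<in> R"
        using xXY xy Reg_mem_iff[OF X] by blast
      then obtain w where yw: "(y, w) \<in> R"
        and final: "\<And>v. (w, v) \<in> R \<Longrightarrow> succ_set R v = succ_set R w"
        using final_successor_exists[OF fin RU tr] by blast
      have xw: "(x, w) \<in> R" using xy yw tr unfolding trans_def by blast
      obtain z where zX: "z \<in> X" and wz: "(w, z) \<in> R"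
        using xXY xw Reg_mem_iff[OF X] by blast
      obtain z' where z'Y: "z' \<in> Y" and wz': "(w, z') \<in> R"
        using xXY xw Reg_mem_iff[OF Y] by blast
      have "v \<in> U \<and> (\<exists>t\<in>Y. (v, t) \<in> R)" if zv: "(z, v) \<in> R" for v
      proof -
        have wv: "(w, v) \<in> R" using final[OF wz] zv unfolding succ_set_def by blast
        have "(v, z') \<in> R" using final[OF wv] wz' unfolding succ_set_def by blast
        then show ?thesis using z'Y zv RU by blast
      qed
      then have "z \<in> Y" using Reg_mem_iff[OF Y] wz RU by blast
      moreover have "(y, z) \<in> R" using yw wz tr unfolding trans_def by blast
      ultimately show ?thesis using zX xy RU by blast
    qed
    then show ?thesis
      using xXY Reg_subset[OF X]
      unfolding lower_approx_def upper_approx_def succ_set_def by blast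
  qed
  moreover have "lower_approx U R (upper_approx U R (X \<inter> Y)) \<subseteq> X \<inter> Y"
    using lower_upper_mono[of "X \<inter> Y" X U R] lower_upper_mono[of "X \<inter> Y" Y U R]
      Reg_fixpoint[OF X] Reg_fixpoint[OF Y] by blast
  ultimately show ?thesis
    using Reg_subset[OF X] unfolding Reg_def regular_def by blast
qed

lemma reg_chains_finite:
  assumes "finite U"
  shows "finite (reg_chains U R A)"
proof -
  have "{Y \<in> Reg U R. Y \<subseteq> A} \<subseteq> Pow U" using Reg_subset by blast
  then have "finite {Y \<in> Reg U R. Y \<subseteq> A}" using assms finite_subset by blast
  moreover have "reg_chains U R A \<subseteq> Pow {Y \<in> Reg U R. Y \<subseteq> A}"
    unfolding reg_chains_def by blast
  ultimately show ?thesis by (simp add: finite_subset)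
qed

lemma height_attained:
  assumes "finite U"
  obtains C where "C \<in> reg_chains U R A" and "height U R A = card C - 1"
proof -
  have "{} \<in> reg_chains U R A" unfolding reg_chains_def by simp
  then have "height U R A \<in> (\<lambda>C. card C - 1) ` reg_chains U R A"
    unfolding height_def using reg_chains_finite[OF assms]
    by (intro Max_in) auto
  then show thesis using that by blast
qed

lemma height_ge:
  assumes "finite U" and "C \<in> reg_chains U R A"
  shows "card C - 1 \<le> height U R A"
  unfolding height_def using reg_chains_finite[OF assms(1)] assms(2) by (intro Max_ge) auto

text \<open>Strict monotonicity: a longest chain below W extends by Y and {} to a chain below Y.\<close>
lemma height_strict_mono:
  assumes fin: "finite U" and ser: "serial_on U R"
    and Y: "Y \<in> Reg U R" and WY: "W \<subset> Y"
  shows "height U R W < height U R Y"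
proof -
  obtain C where C: "C \<in> reg_chains U R W" and hC: "height U R W = card C - 1"
    using height_attained[OF fin] by blast
  have C_below: "C \<subseteq> {Z \<in> Reg U R. Z \<subseteq> W}"
    and C_chain: "\<forall>Z1\<in>C. \<forall>Z2\<in>C. Z1 \<subseteq> Z2 \<or> Z2 \<subseteq> Z1"
    using C unfolding reg_chains_def by auto
  define C' where "C' = insert {} (insert Y C)"
  have C': "C' \<in> reg_chains U R Y"
    unfolding reg_chains_def C'_def using C_below C_chain WY Y empty_in_Reg[OF ser] by blast
  have "C \<subseteq> Pow U" using C_below Reg_subset by blast
  then have finC: "finite C" using fin finite_subset by blast
  have "Y \<notin> C" and "Y \<noteq> {}" using C_below WY by blast+
  have "card (insert Y C) = Suc (card C)" using finC \<open>Y \<notin> C\<close> by simp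
  moreover have "card (insert Y C) \<le> card C'"
    unfolding C'_def using finC by (simp add: card_insert_le)
  moreover have "card {{}, Y} \<le> card C'"
    unfolding C'_def using finC by (intro card_mono) auto
  moreover have "card {{}, Y} = 2" using \<open>Y \<noteq> {}\<close> by simp
  ultimately have "card C' \<ge> Suc (card C)" "card C' \<ge> 2" by linarith+
  then have "card C - 1 < card C' - 1" by linarith
  then show ?thesis using hC height_ge[OF fin C'] by linarith
qed

lemma indep_subsets_finite:
  assumes "finite U" and "X \<subseteq> U"
  shows "finite {I. I \<subseteq> X \<and> reg_indep U R I}"
proof -
  have "{I. I \<subseteq> X \<and> reg_indep U R I} \<subseteq> Pow U" using assms(2) by blast
  then show ?thesis using assms(1) by (simp add: finite_subset)
qed

lemma rank_attained:
  assumes "finite U" and "X \<subseteq> U"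
  obtains I where "I \<subseteq> X" and "reg_indep U R I" and "reg_rank U R X = card I"
proof -
  have "{} \<in> {I. I \<subseteq> X \<and> reg_indep U R I}" unfolding reg_indep_def by simp
  then have "reg_rank U R X \<in> card ` {I. I \<subseteq> X \<and> reg_indep U R I}"
    unfolding reg_rank_def using indep_subsets_finite[OF assms] by (intro Max_in) auto
  then show thesis using that by blast
qed

lemma rank_ge:
  assumes "finite U" and "X \<subseteq> U" and "I \<subseteq> X" and "reg_indep U R I"
  shows "card I \<le> reg_rank U R X"
  unfolding reg_rank_def using indep_subsets_finite[OF assms(1,2)] assms(3,4) by auto

lemma subset_reg_cl:
  assumes "X \<subseteq> U"
  shows "X \<subseteq> reg_cl U R X"
  using assms unfolding reg_cl_def by (auto simp: insert_absorb)

text \<open>An independent subset of a regular set X stays independent after adding a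
  point outside X: regular sets Y containing u satisfy X \<inter> Y \<subset> Y, and the
  height jump from X \<inter> Y to Y absorbs u.\<close>
lemma indep_insert_outside_Reg:
  assumes fin: "finite U" and RU: "R \<subseteq> U \<times> U" and ser: "serial_on U R" and tr: "trans R"
    and X: "X \<in> Reg U R" and I: "I \<subseteq> X" "reg_indep U R I"
    and u: "u \<in> U" "u \<notin> X"
  shows "reg_indep U R (insert u I)"
  unfolding reg_indep_def
proof (intro conjI ballI)
  show "insert u I \<subseteq> U" using I(1) Reg_subset[OF X] u(1) by blast
  have finI: "finite I" using I(1) Reg_subset[OF X] fin by (meson finite_subset order_trans)
  fix Y assume Y: "Y \<in> Reg U R"
  show "card (insert u I \<inter> Y) \<le> height U R Y"
  proof (cases "u \<in> Y")
    case False
    then have "insert u I \<inter> Y = I \<inter> Y" by blast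
    then show ?thesis using I(2) Y unfolding reg_indep_def by simp
  next
    case True
    have XY: "X \<inter> Y \<in> Reg U R" using Reg_Int[OF fin RU tr X Y] .
    have "I \<inter> Y = I \<inter> (X \<inter> Y)" using I(1) by blast
    then have "card (I \<inter> Y) \<le> height U R (X \<inter> Y)"
      using I(2) XY unfolding reg_indep_def by simp
    also have "\<dots> < height U R Y"
      using height_strict_mono[OF fin ser Y] True u(2) by blast
    finally have "card (I \<inter> Y) < height U R Y" .
    moreover have "insert u I \<inter> Y = insert u (I \<inter> Y)" "u \<notin> I \<inter> Y"
      using True u(2) I(1) by auto
    ultimately show ?thesis using finI by simp
  qed
qed

theorem proposition7:
  fixes U :: "'a set" and R :: "('a \<times> 'a) set"
  assumes "finite U" and "U \<noteq> {}"
    and "R \<subseteq> U \<times> U"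
    and "serial_on U R"
    and "trans R"
    and "X \<in> Reg U R"
  shows "reg_cl U R X = X"
proof
  have XU: "X \<subseteq> U" using Reg_subset[OF assms(6)] .
  then show "X \<subseteq> reg_cl U R X" by (rule subset_reg_cl)
  show "reg_cl U R X \<subseteq> X"
  proof
    fix u assume "u \<in> reg_cl U R X"
    then have u: "u \<in> U" and same_rank: "reg_rank U R (X \<union> {u}) = reg_rank U R X"
      unfolding reg_cl_def by auto
    show "u \<in> X"
    proof (rule ccontr)
      assume uX: "u \<notin> X"
      obtain I where I: "I \<subseteq> X" "reg_indep U R I" and rank: "reg_rank U R X = card I"
        using rank_attained[OF assms(1) XU] by blast
      have "reg_indep U R (insert u I)"
        using indep_insert_outside_Reg[OF assms(1,3,4,5,6) I u uX] .
      moreover have "X \<union> {u} \<subseteq> U" "insert u I \<subseteq> X \<union> {u}" using XU u I(1) by auto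
      ultimately have "card (insert u I) \<le> reg_rank U R (X \<union> {u})"
        using rank_ge[OF assms(1)] by blast
      moreover have "card (insert u I) = Suc (card I)"
        using I(1) XU assms(1) uX by (meson card_insert_disjoint finite_subset order_trans subsetD)
      ultimately show False using same_rank rank by simp
    qed
  qed
qed

end
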